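(* Let $f(\mathbf{x})=\mathbf{x}M\mathbf{x}^T$ be a quadratic form in $s\ge10$ variables, $M=(a_{i,j})$ symmetric with integer entries, and assume that the $5\times5$ matrix $M_0=(a_{i,j+5})_{1\le i,j\le5}$ has rank $5$. For $\mathbf{v}\in\mathbb{Z}^5$ and $1\le i\le 5$ let $h_i(\mathbf{v})=2\sum_{j=1}^5a_{i,j+5}v_j$. Let $X$ be sufficiently large, $1\le Y\le X$, $q$ a positive integer, $c_1,\ldots,c_5\in\mathbb{Z}$, and $H_1,\ldots,H_5$ positive reals with $H_i\ge q\log X$ for all $i$. Let $$\mathcal{H}=\sum_{\mathbf{v}}\rho(v_1)\cdots\rho(v_5),$$ the sum over $\mathbf{v}\in\mathbb{Z}^5$ with $0<|v_j|<Y$, $H_j<|h_j(\mathbf{v})|\le2H_j$ and $h_j(\mathbf{v})\equiv c_j\pmod q$ for $j=1,\ldots,5$. Then $$\mathcal{H}\ll H_1H_2H_3H_4H_5\,q^{-5}\tau(q),$$ with implied constant depending only on $f$.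
   Context: $\rho(x)=\prod_{p\mid x}(1+\frac1p)$ for nonzero integers $x$ (product over primes); $\tau$ is the divisor function. *)

theory Defs
  imports "HOL-Analysis.Analysis" "HOL-Computational_Algebra.Primes"
begin

definition rho :: "int \<Rightarrow> real" where
  "rho x = (\<Prod>p\<in>prime_factors (nat \<bar>x\<bar>). 1 + 1 / real p)"

definition tau :: "nat \<Rightarrow> nat" where
  "tau n = card {d. d dvd n}"

definition idx5 :: "5 \<Rightarrow> nat" where
  "idx5 i = nat (Rep_bit1 i) + 1"

definition M0 :: "(nat \<Rightarrow> nat \<Rightarrow> int) \<Rightarrow> real^5^5" where
  "M0 a = (\<chi> i j. real_of_int (a (idx5 i) (idx5 j + 5)))"

definition hfun :: "(nat \<Rightarrow> nat \<Rightarrow> int) \<Rightarrow> nat \<Rightarrow> (nat \<Rightarrow> int) \<Rightarrow> int" where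
  "hfun a i v = 2 * (\<Sum>j=1..5. a i (j + 5) * v j)"

(* the index set of the sum: vectors v in Z^5 (functions supported on {1..5}) *)
definition Hset :: "(nat \<Rightarrow> nat \<Rightarrow> int) \<Rightarrow> real \<Rightarrow> nat \<Rightarrow> (nat \<Rightarrow> int) \<Rightarrow> (nat \<Rightarrow> real)
    \<Rightarrow> (nat \<Rightarrow> int) set" where
  "Hset a Y q c H = {v. (\<forall>j. j \<notin> {1..5} \<longrightarrow> v j = 0) \<and>
     (\<forall>j\<in>{1..5}. 0 < \<bar>v j\<bar> \<and> real_of_int \<bar>v j\<bar> < Y \<and>
        H j < real_of_int \<bar>hfun a j v\<bar> \<and> real_of_int \<bar>hfun a j v\<bar> \<le> 2 * H j \<and>
        hfun a j v mod int q = c j mod int q)}"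

definition Hsum :: "(nat \<Rightarrow> nat \<Rightarrow> int) \<Rightarrow> real \<Rightarrow> nat \<Rightarrow> (nat \<Rightarrow> int) \<Rightarrow> (nat \<Rightarrow> real) \<Rightarrow> real" where
  "Hsum a Y q c H = (\<Sum>v\<in>Hset a Y q c H. \<Prod>j=1..5. rho (v j))"

end

theory Submission
  imports Defs "HOL-Real_Asymp.Real_Asymp"
begin

text \<open>
  Since \<rho>(v_1)\<cdots>\<rho>(v_5) \<le> \<rho>(v_1)^5 + \<dots> + \<rho>(v_5)^5, it suffices to bound the sum of
  \<rho>(v_k)^5 for each k. For |n| < X the prime factors of n above y = 2^N \<ge> log X change \<rho>(n)
  by a factor at most e, and (1 + 1/p)^5 \<le> 1 + 31/p; so \<rho>(v_k)^5 is bounded by a constant times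
  the sum of 31^|A| / \<Prod>A over the sets A of primes up to y dividing v_k. After exchanging
  the sums one counts the v with \<Prod>A dividing v_k. By Cramer's rule there are m and integers
  \<Delta>, \<beta> \<noteq> 0 with 2\<Delta>(v_k - v'_k) = \<beta>(h_m(v) - h_m(v')) whenever h_j(v) = h_j(v') for all j \<noteq> m,
  and v is determined by h(v). Once the h_j(v), j \<noteq> m, are fixed (O(H_j/q) choices each),
  h_m(v) lies in one residue class modulo q d, where d is the part of \<Prod>A coprime to q\<beta>;
  this leaves O(H_1\<cdots>H_5 q^-5 (1/d + 1/log X)) vectors. Finally the sum of 31^|A| / (d \<Prod>A)
  is O(\<tau>(q)), while the sum of 31^|A| / \<Prod>A is the product of 1 + 31/p over p \<le> y, which is
  at most log X for large X by Chebyshev's estimate.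
\<close>

section \<open>Products of distinct primes and the divisor function\<close>

lemma prime_dvd_prod_primes_iff:
  assumes "finite A" "\<forall>q\<in>A. prime (q::nat)" "prime p"
  shows "p dvd \<Prod>A \<longleftrightarrow> p \<in> A"
proof
  assume "p dvd \<Prod>A"
  then obtain q where "q \<in> A" "p dvd q" using prime_dvd_prod_iff[OF assms(1) assms(3), of id] by auto
  then show "p \<in> A" using assms primes_dvd_imp_eq by blast
next
  assume "p \<in> A" then show "p dvd \<Prod>A" using assms(1) by (simp add: dvd_prod_eqI)
qed

lemma prod_primes_dvd_int:
  assumes "finite A" "\<forall>p\<in>A. prime (p::nat) \<and> int p dvd z"
  shows "int (\<Prod>A) dvd z"
  using assms
proof (induction A rule: finite_induct)
  case empty then show ?case by simp
next
  case (insert p F)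
  have p: "prime p" "int p dvd z" using insert.prems by auto
  have IH: "int (\<Prod>F) dvd z" using insert by auto
  have "\<not> p dvd \<Prod>F" using prime_dvd_prod_primes_iff[of F p] insert by auto
  then have "coprime (int p) (int (\<Prod>F))" using prime_imp_coprime p(1) by (simp only: coprime_int_iff)
  then have "int p * int (\<Prod>F) dvd z" using divides_mult p(2) IH by blast
  then show ?case using insert by simp
qed

lemma prod_primes_dvd_nat:
  assumes "finite A" "\<forall>p\<in>A. prime (p::nat) \<and> p dvd m"
  shows "\<Prod>A dvd m"
proof -
  have "int (\<Prod>A) dvd int m" using prod_primes_dvd_int[of A "int m"] assms by auto
  then show ?thesis by (simp only: int_dvd_int_iff)
qed

lemma two_pow_card_prime_factors_le_tau:
  assumes "q > 0"
  shows "2 ^ card (prime_factors q) \<le> tau q"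
proof -
  let ?P = "prime_factors q"
  have "card (Pow ?P) \<le> card {d. d dvd q}"
  proof (rule card_inj_on_le[of "\<lambda>A. \<Prod>A"])
    show "inj_on (\<lambda>A. \<Prod>A) (Pow ?P)"
    proof (rule inj_onI)
      fix A B assume A: "A \<in> Pow ?P" and B: "B \<in> Pow ?P" and e: "\<Prod>A = \<Prod>B"
      have fA: "finite A" "\<forall>q\<in>A. prime q" using A finite_subset by auto
      have fB: "finite B" "\<forall>q\<in>B. prime q" using B finite_subset by auto
      show "A = B"
      proof (rule set_eqI)
        fix p
        show "p \<in> A \<longleftrightarrow> p \<in> B"
          using prime_dvd_prod_primes_iff[OF fA, of p] prime_dvd_prod_primes_iff[OF fB, of p] e fA fB
          by (cases "prime p") auto
      qed
    qed
    show "(\<lambda>A. \<Prod>A) ` Pow ?P \<subseteq> {d. d dvd q}"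
    proof
      fix d assume "d \<in> (\<lambda>A. \<Prod>A) ` Pow ?P"
      then obtain A where A: "A \<subseteq> ?P" "d = \<Prod>A" by auto
      then have "\<Prod>A dvd q" using prod_primes_dvd_nat[of A q] finite_subset by auto
      then show "d \<in> {d. d dvd q}" using A by simp
    qed
    show "finite {d. d dvd q}" using assms by simp
  qed
  then show ?thesis unfolding tau_def by (simp add: card_Pow)
qed

lemma prod_prime_factors_one_plus_le:
  fixes c :: nat
  shows "(\<Prod>p\<in>prime_factors n. 1 + real c / real p) \<le> (1 + real c) ^ c * 2 ^ card (prime_factors n)"
proof -
  let ?P = "prime_factors n"
  have "(\<Prod>p\<in>?P. 1 + real c / real p) \<le> (\<Prod>p\<in>?P. 2 * (if p < c then 1 + real c else 1))"
  proof (rule prod_mono, safe)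
    fix p assume "p \<in> ?P"
    then have "p \<ge> 2" using prime_ge_2_nat in_prime_factors_imp_prime by blast
    then have p2: "real p \<ge> 2" by simp
    show "0 \<le> 1 + real c / real p" by simp
    show "1 + real c / real p \<le> 2 * (if p < c then 1 + real c else 1)"
    proof (cases "p < c")
      case True
      have "real c / real p \<le> real c / 1" using p2 by (intro divide_left_mono) auto
      then show ?thesis using True by simp
    next
      case False
      then have "real c / real p \<le> 1" using p2 by simp
      then show ?thesis using False by simp
    qed
  qed
  also have "\<dots> = 2 ^ card ?P * (\<Prod>p\<in>?P. if p < c then 1 + real c else 1)"
    by (simp add: prod.distrib)
  also have "(\<Prod>p\<in>?P. if p < c then 1 + real c else 1) = (\<Prod>p\<in>?P \<inter> {..<c}. 1 + real c)"
    by (simp add: prod.If_cases Int_def)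
  also have "\<dots> = (1 + real c) ^ card (?P \<inter> {..<c})" by simp
  also have "\<dots> \<le> (1 + real c) ^ c"
  proof -
    have "card (?P \<inter> {..<c}) \<le> card {..<c}" by (intro card_mono) auto
    then show ?thesis by (intro power_increasing) auto
  qed
  finally show ?thesis by (simp add: mult.commute)
qed

section \<open>Sums and products over primes\<close>

lemma prime_dvd_central_binomial:
  assumes "prime p" "m < p" "p \<le> 2*m"
  shows "p dvd (2*m choose m)"
proof -
  have e: "fact m * fact m * (2*m choose m) = (fact (2*m) :: nat)"
    using binomial_fact_lemma[of m "2*m"] by simp
  have "p dvd fact (2*m)" using assms prime_dvd_fact_iff by blast
  then have "p dvd fact m * (fact m * (2*m choose m))" using e by (simp add: mult.assoc)
  moreover have "\<not> p dvd fact m" using assms prime_dvd_fact_iff by auto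
  ultimately show ?thesis using assms(1) prime_dvd_mult_iff by blast
qed

lemma prod_primes_between_le_four_pow:
  "\<Prod>{p. prime p \<and> m < p \<and> p \<le> 2*m} \<le> (4::nat) ^ m"
proof -
  let ?Q = "{p. prime p \<and> m < p \<and> p \<le> 2*m}"
  have fin: "finite ?Q" by (rule finite_subset[of _ "{..2*m}"]) auto
  have "\<Prod>?Q dvd (2*m choose m)"
    using prod_primes_dvd_nat[OF fin] prime_dvd_central_binomial by blast
  then have "\<Prod>?Q \<le> (2*m choose m)" by (simp add: dvd_imp_le)
  also have "\<dots> \<le> 2 ^ (2*m)" by (rule binomial_le_pow2)
  also have "\<dots> = 4 ^ m" by (simp add: power_mult)
  finally show ?thesis .
qed

lemma card_primes_dyadic_le:
  "card {p::nat. prime p \<and> 2^i < p \<and> p \<le> 2^(i+1)} * i \<le> 2^(i+1)"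
proof -
  let ?m = "2^i :: nat"
  let ?Q = "{p. prime p \<and> ?m < p \<and> p \<le> 2*?m}"
  have fin: "finite ?Q" by (rule finite_subset[of _ "{..2*?m}"]) auto
  have "(\<Prod>p\<in>?Q. ?m) \<le> (\<Prod>p\<in>?Q. p)" by (rule prod_mono) auto
  also have "\<dots> \<le> 4 ^ ?m" using prod_primes_between_le_four_pow[of ?m] by simp
  finally have "?m ^ card ?Q \<le> 4 ^ ?m" by simp
  then have "2 ^ (i * card ?Q) \<le> (2::nat) ^ (2 * ?m)" by (simp add: power_mult)
  then have "i * card ?Q \<le> 2 * ?m" by (subst (asm) power_increasing_iff) auto
  then show ?thesis by (simp add: mult.commute)
qed

lemma sum_inverse_primes_dyadic_le:
  assumes "i \<ge> 1"
  shows "(\<Sum>p | prime p \<and> 2^i < p \<and> p \<le> 2^(i+1). 1 / real p) \<le> 2 / real i"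
proof -
  let ?Q = "{p::nat. prime p \<and> 2^i < p \<and> p \<le> 2^(i+1)}"
  have "(\<Sum>p\<in>?Q. 1 / real p) \<le> (\<Sum>p\<in>?Q. 1 / 2^i)"
  proof (rule sum_mono)
    fix p assume "p \<in> ?Q"
    then have "real p \<ge> 2^i"
      by (metis (mono_tags, lifting) mem_Collect_eq less_imp_le_nat numeral_power_le_of_nat_cancel_iff)
    then show "1 / real p \<le> 1 / 2^i" by (simp add: frac_le)
  qed
  also have "\<dots> = real (card ?Q) / 2^i" by simp
  also have "\<dots> \<le> 2 / real i"
  proof -
    have "real (card ?Q) * real i \<le> 2^(i+1)"
      using card_primes_dyadic_le[of i] by (metis of_nat_le_iff of_nat_mult of_nat_numeral of_nat_power)
    then show ?thesis using assms by (simp add: field_simps)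
  qed
  finally show ?thesis .
qed

lemma sum_inverse_primes_le_harm:
  "(\<Sum>p | prime p \<and> p \<le> 2^(n+1). 1 / real p) \<le> 1/2 + 2 * harm n"
proof (induction n)
  case 0
  have "{p. prime p \<and> p \<le> (2::nat)} = {2}"
    using prime_ge_2_nat by (auto intro: antisym)
  then show ?case by (simp add: harm_def)
next
  case (Suc n)
  let ?A = "{p::nat. prime p \<and> p \<le> 2^(n+1)}"
  let ?Q = "{p::nat. prime p \<and> 2^(n+1) < p \<and> p \<le> 2^(n+1+1)}"
  have fA: "finite ?A" by (rule finite_subset[of _ "{..2^(n+1)}"]) auto
  have fQ: "finite ?Q" by (rule finite_subset[of _ "{..2^(n+1+1)}"]) auto
  have le: "(2::nat)^(n+1) \<le> 2^(Suc n+1)" by simp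
  have "{p. prime p \<and> p \<le> 2^(Suc n+1)} = ?A \<union> ?Q"
    using le by (auto simp del: power_Suc intro: order_trans)
  then have "(\<Sum>p | prime p \<and> p \<le> 2^(Suc n+1). 1 / real p)
      = (\<Sum>p\<in>?A. 1 / real p) + (\<Sum>p\<in>?Q. 1 / real p)"
    using fA fQ by (simp del: power_Suc add: sum.union_disjoint disjoint_iff)
  also have "\<dots> \<le> 1/2 + 2 * harm n + 2 / real (n+1)"
    using Suc.IH sum_inverse_primes_dyadic_le[of "n+1"] by simp
  also have "\<dots> = 1/2 + 2 * harm (Suc n)"
    by (simp add: harm_Suc field_simps)
  finally show ?case .
qed

lemma harm_le_one_plus_ln: "n \<ge> 1 \<Longrightarrow> harm n \<le> 1 + ln (real n)"
  using euler_mascheroni_sequence_decreasing[of 1 n] by (simp add: harm_def)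

lemma prod_primes_le_pow2_le:
  fixes c :: nat
  assumes "N \<ge> 1"
  shows "(\<Prod>p | prime p \<and> p \<le> 2^N. 1 + real c / real p) \<le> exp (5 * real c / 2) * real N ^ (2 * c)"
proof -
  let ?P = "{p::nat. prime p \<and> p \<le> 2^N}"
  let ?P' = "{p::nat. prime p \<and> p \<le> 2^(N+1)}"
  have finP': "finite ?P'" by (rule finite_subset[of _ "{..2^(N+1)}"]) auto
  have sub: "?P \<subseteq> ?P'"
  proof -
    have "(2::nat)^N \<le> 2^(N+1)" by simp
    then show ?thesis by (auto intro: order_trans)
  qed
  have "(\<Prod>p\<in>?P. 1 + real c / real p) \<le> exp (\<Sum>p\<in>?P. real c / real p)"
    by (rule prod_le_exp_sum) simp
  also have "(\<Sum>p\<in>?P. real c / real p) = real c * (\<Sum>p\<in>?P. 1 / real p)"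
    by (simp add: sum_distrib_left)
  also have "(\<Sum>p\<in>?P. 1 / real p) \<le> (\<Sum>p\<in>?P'. 1 / real p)"
    by (rule sum_mono2[OF finP' sub]) simp
  also have "\<dots> \<le> 1/2 + 2 * harm N" by (rule sum_inverse_primes_le_harm)
  also have "\<dots> \<le> 1/2 + 2 * (1 + ln (real N))" using harm_le_one_plus_ln[OF assms] by simp
  also have "real c * (1/2 + 2 * (1 + ln (real N))) = 5 * real c / 2 + real (2 * c) * ln (real N)"
    by (simp add: field_simps)
  also have "exp \<dots> = exp (5 * real c / 2) * exp (real (2 * c) * ln (real N))"
    by (rule exp_add)
  also have "exp (real (2 * c) * ln (real N)) = real N ^ (2 * c)"
    using assms by (subst exp_of_nat_mult) simp
  finally show ?thesis by (simp add: mult_left_mono)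
qed

lemma sum_inverse_squares_le:
  "N \<ge> 1 \<Longrightarrow> (\<Sum>i\<in>{2..N}. 1 / (real i)^2) \<le> 1 - 1 / real N"
proof (induction N rule: dec_induct)
  case base then show ?case by simp
next
  case (step N)
  have N: "real N \<ge> 1" using step by simp
  have "{2..Suc N} = insert (Suc N) {2..N}" using step by auto
  then have "(\<Sum>i\<in>{2..Suc N}. 1 / (real i)^2) = 1 / (real N + 1)^2 + (\<Sum>i\<in>{2..N}. 1 / (real i)^2)"
    by simp
  also have "\<dots> \<le> 1 / (real N + 1)^2 + (1 - 1 / real N)" using step by simp
  also have "\<dots> \<le> 1 - 1 / real (Suc N)"
  proof -
    have e: "1 / real N - 1 / (real N + 1) = 1 / (real N * (real N + 1))"
      using N by (simp add: field_simps)
    have "1 / (real N + 1)^2 \<le> 1 / (real N * (real N + 1))"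
      using N by (intro divide_left_mono) (auto simp: power2_eq_square)
    then have "1 / (real N + 1)^2 \<le> 1 / real N - 1 / (real N + 1)" using e by simp
    then show ?thesis by (simp add: add.commute)
  qed
  finally show ?case .
qed

lemma sum_inverse_squares_primes_le_1:
  assumes "finite P" "\<forall>p\<in>P. prime (p::nat)"
  shows "(\<Sum>p\<in>P. 1 / (real p)^2) \<le> 1"
proof -
  define N where "N = Max (insert 1 P)"
  have "P \<subseteq> {2..N}" using assms prime_ge_2_nat unfolding N_def by (auto intro: Max_ge)
  then have "(\<Sum>p\<in>P. 1 / (real p)^2) \<le> (\<Sum>i\<in>{2..N}. 1 / (real i)^2)"
    by (intro sum_mono2) auto
  also have "\<dots> \<le> 1 - 1 / real N" using sum_inverse_squares_le[of N] assms unfolding N_def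
    by (simp add: Max_ge_iff)
  also have "\<dots> \<le> 1" by simp
  finally show ?thesis .
qed

section \<open>The linear forms and Cramer's rule\<close>

lemma exhaust_5:
  fixes x :: 5
  shows "x = 0 \<or> x = 1 \<or> x = 2 \<or> x = 3 \<or> x = 4"
proof (induct x)
  case (of_int z)
  then have "z = 0 \<or> z = 1 \<or> z = 2 \<or> z = 3 \<or> z = 4" by fastforce
  then show ?case by auto
qed

lemma idx5_simps: "idx5 0 = 1" "idx5 1 = 2" "idx5 2 = 3" "idx5 3 = 4" "idx5 4 = 5"
  unfolding idx5_def by (simp_all add: bit1.Rep_numeral bit1.Rep_0 bit1.Rep_1)

lemma UNIV_5: "(UNIV::5 set) = {0, 1, 2, 3, 4}"
  using exhaust_5 by auto

lemma sum_UNIV_5: "(\<Sum>i\<in>(UNIV::5 set). f i) = f 0 + f 1 + f 2 + f 3 + f 4"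
  unfolding UNIV_5 by (simp add: algebra_simps)

lemma sum_1_to_5: "(\<Sum>j=(1::nat)..5. f j) = f 1 + f 2 + f 3 + f 4 + f 5"
  by (simp add: numeral_eq_Suc algebra_simps)

lemma idx5_in_1_5: "idx5 i \<in> {1..5}"
  using exhaust_5[of i] by (auto simp: idx5_simps)

lemma inj_idx5: "inj idx5"
proof (rule injI)
  fix x y :: 5 assume "idx5 x = idx5 y"
  then have "nat (Rep_bit1 x) = nat (Rep_bit1 y)" by (simp add: idx5_def)
  moreover have "Rep_bit1 x \<ge> 0" "Rep_bit1 y \<ge> 0" using bit1.Rep_bit1 by auto
  ultimately have "Rep_bit1 x = Rep_bit1 y" by simp
  then show "x = y" by (simp add: bit1.Rep_bit1_inject)
qed

lemma idx5_onto: "j \<in> {1..5} \<Longrightarrow> \<exists>i. idx5 i = j"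
proof -
  assume "j \<in> {1..5}"
  then have "j = 1 \<or> j = 2 \<or> j = 3 \<or> j = 4 \<or> j = 5" by auto
  then show ?thesis using idx5_simps by metis
qed

definition vec5 :: "(nat \<Rightarrow> int) \<Rightarrow> real^5" where
  "vec5 v = (\<chi> i. real_of_int (v (idx5 i)))"

lemma hfun_eq_M0_mult: "real_of_int (hfun a (idx5 i) v) = 2 * (M0 a *v vec5 v) $ i"
proof -
  have "(M0 a *v vec5 v) $ i = (\<Sum>j\<in>UNIV. real_of_int (a (idx5 i) (idx5 j + 5)) * real_of_int (v (idx5 j)))"
    by (simp add: matrix_vector_mult_def M0_def vec5_def)
  also have "\<dots> = (\<Sum>j=1..5. real_of_int (a (idx5 i) (j + 5)) * real_of_int (v j))"
    unfolding sum_1_to_5 sum_UNIV_5 idx5_simps by simp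
  finally show ?thesis by (simp add: hfun_def sum_1_to_5)
qed

lemma det_in_Ints:
  fixes A :: "real^'n^'n"
  assumes "\<And>i j. A $ i $ j \<in> \<int>"
  shows "det A \<in> \<int>"
  unfolding det_def using assms by (intro Ints_sum Ints_mult Ints_prod) auto

lemma M0_in_Ints: "M0 a $ i $ j \<in> \<int>"
  by (simp add: M0_def)

lemma hfun_inj:
  assumes "rank (M0 a) = 5"
    and "\<forall>j. j \<notin> {1..5} \<longrightarrow> v j = 0" and "\<forall>j. j \<notin> {1..5} \<longrightarrow> v' j = 0"
    and "\<forall>j\<in>{1..5}. hfun a j v = hfun a j v'"
  shows "v = v'"
proof -
  have "inj ((*v) (M0 a))" using assms(1) full_rank_injective[of "M0 a"] by simp
  moreover have "M0 a *v vec5 v = M0 a *v vec5 v'"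
  proof (rule vec_eq_iff[THEN iffD2], rule allI)
    fix i
    have "real_of_int (hfun a (idx5 i) v) = real_of_int (hfun a (idx5 i) v')"
      using assms(4) idx5_in_1_5 by simp
    then show "(M0 a *v vec5 v) $ i = (M0 a *v vec5 v') $ i" by (simp add: hfun_eq_M0_mult)
  qed
  ultimately have e: "vec5 v = vec5 v'" by (simp add: inj_def)
  show ?thesis
  proof
    fix j show "v j = v' j"
    proof (cases "j \<in> {1..5}")
      case True
      then obtain i where "idx5 i = j" using idx5_onto by blast
      then show ?thesis using e by (metis (no_types, lifting) of_int_eq_iff vec_lambda_beta vec5_def)
    next
      case False then show ?thesis using assms(2,3) by simp
    qed
  qed
qed

lemma M0_mult_vec5_diff:
  assumes "\<forall>j\<in>{1..5}-{idx5 \<mu>}. hfun a j v = hfun a j v'"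
  shows "M0 a *v (vec5 v - vec5 v') =
    (real_of_int (hfun a (idx5 \<mu>) v - hfun a (idx5 \<mu>) v') / 2) *s axis \<mu> 1"
proof (rule vec_eq_iff[THEN iffD2], rule allI)
  fix i
  have "(M0 a *v (vec5 v - vec5 v')) $ i = (M0 a *v vec5 v) $ i - (M0 a *v vec5 v') $ i"
    by (simp add: matrix_vector_mult_diff_distrib)
  also have "\<dots> = (real_of_int (hfun a (idx5 i) v) - real_of_int (hfun a (idx5 i) v')) / 2"
    by (simp add: hfun_eq_M0_mult)
  also have "\<dots> = ((real_of_int (hfun a (idx5 \<mu>) v - hfun a (idx5 \<mu>) v') / 2) *s axis \<mu> 1) $ i"
  proof (cases "i = \<mu>")
    case True then show ?thesis by (simp add: axis_def)
  next
    case False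
    then have "idx5 i \<noteq> idx5 \<mu>" using inj_idx5 by (auto simp: inj_def)
    then have "hfun a (idx5 i) v = hfun a (idx5 i) v'" using assms idx5_in_1_5 by auto
    then show ?thesis using False by (simp add: axis_def)
  qed
  finally show "(M0 a *v (vec5 v - vec5 v')) $ i =
    ((real_of_int (hfun a (idx5 \<mu>) v - hfun a (idx5 \<mu>) v') / 2) *s axis \<mu> 1) $ i" .
qed

lemma hfun_cramer_relation:
  assumes "rank (M0 a) = 5" and "k \<in> {1..5}"
  shows "\<exists>m \<Delta> \<beta>. m \<in> {1..5} \<and> \<beta> \<noteq> (0::int) \<and>
     (\<forall>v v'. (\<forall>j\<in>{1..5}-{m}. hfun a j v = hfun a j v') \<longrightarrow>
        2*\<Delta>*(v k - v' k) = \<beta>*(hfun a m v - hfun a m v'))"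
proof -
  obtain \<kappa> where \<kappa>: "idx5 \<kappa> = k" using idx5_onto assms(2) by blast
  have dnz: "det (M0 a) \<noteq> 0" using assms(1) det_eq_0_rank[of "M0 a"] by simp
  then obtain B where B: "M0 a ** B = mat 1" "B ** M0 a = mat 1"
    using invertible_det_nz[of "M0 a"] unfolding invertible_def by blast
  have "(B ** M0 a) $ \<kappa> $ \<kappa> = 1" using B by (simp add: mat_def)
  then have "(\<Sum>\<mu>\<in>UNIV. B $ \<kappa> $ \<mu> * M0 a $ \<mu> $ \<kappa>) = 1" by (simp add: matrix_matrix_mult_def)
  then obtain \<mu> where \<mu>: "B $ \<kappa> $ \<mu> \<noteq> 0"
    by (metis (mono_tags, lifting) mult_eq_0_iff sum.neutral zero_neq_one)
  define y where "y = B *v axis \<mu> 1"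
  have My: "M0 a *v y = axis \<mu> 1"
    unfolding y_def by (simp add: matrix_vector_mul_assoc B)
  have y\<kappa>: "y $ \<kappa> = B $ \<kappa> $ \<mu>"
  proof -
    have "\<And>j. B $ \<kappa> $ j * (if j = \<mu> then 1 else 0) = (if j = \<mu> then B $ \<kappa> $ \<mu> else 0)" by simp
    then show ?thesis unfolding y_def matrix_vector_mult_def axis_def by simp
  qed
  \<comment> \<open>Cramer's rule expresses det M0 \<cdot> B$\<kappa>$\<mu> as an integer determinant.\<close>
  have "det (\<chi> i j. if j = \<kappa> then (M0 a *v y)$i else M0 a$i$j) = y$\<kappa> * det (M0 a)"
    by (rule cramer_lemma)
  moreover have "det (\<chi> i j. if j = \<kappa> then (M0 a *v y)$i else M0 a$i$j) \<in> \<int>"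
    by (rule det_in_Ints) (auto simp: My axis_def M0_in_Ints)
  ultimately obtain \<beta> where \<beta>: "real_of_int \<beta> = B $ \<kappa> $ \<mu> * det (M0 a)"
    using y\<kappa> by (metis Ints_cases)
  have "det (M0 a) \<in> \<int>" by (rule det_in_Ints) (simp add: M0_in_Ints)
  then obtain \<Delta> where \<Delta>: "real_of_int \<Delta> = det (M0 a)" by (metis Ints_cases)
  have relation: "2*\<Delta>*(v k - v' k) = \<beta>*(hfun a (idx5 \<mu>) v - hfun a (idx5 \<mu>) v')"
    if "\<forall>j\<in>{1..5}-{idx5 \<mu>}. hfun a j v = hfun a j v'" for v v'
  proof -
    define \<delta> where "\<delta> = real_of_int (hfun a (idx5 \<mu>) v - hfun a (idx5 \<mu>) v')"
    have "B *v (M0 a *v (vec5 v - vec5 v')) = (\<delta>/2) *s y"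
      using M0_mult_vec5_diff[OF that] by (simp add: \<delta>_def y_def vector_scalar_commute)
    then have "vec5 v - vec5 v' = (\<delta>/2) *s y"
      by (simp add: matrix_vector_mul_assoc B)
    then have "(vec5 v - vec5 v') $ \<kappa> = (\<delta>/2) * B $ \<kappa> $ \<mu>" by (simp add: y\<kappa>)
    then have "real_of_int (v k) - real_of_int (v' k) = (\<delta>/2) * B $ \<kappa> $ \<mu>"
      by (simp add: vec5_def \<kappa>)
    then have "det (M0 a) * (real_of_int (v k) - real_of_int (v' k)) = det (M0 a) * ((\<delta>/2) * B $ \<kappa> $ \<mu>)"
      by simp
    then have "real_of_int (2*\<Delta>*(v k - v' k)) = real_of_int (\<beta>*(hfun a (idx5 \<mu>) v - hfun a (idx5 \<mu>) v'))"
      by (simp add: \<beta> \<Delta> \<delta>_def algebra_simps)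
    then show ?thesis by (simp only: of_int_eq_iff)
  qed
  show ?thesis
    using idx5_in_1_5[of \<mu>] \<beta> \<mu> dnz relation by (intro exI[of _ "idx5 \<mu>"] exI[of _ \<Delta>] exI[of _ \<beta>]) auto
qed

section \<open>Truncating \<rho> at small primes\<close>

lemma rho_ge_1: "rho n \<ge> 1"
  unfolding rho_def by (rule prod_ge_1) auto

lemma prod_le_sum_power_card:
  fixes x :: "'a \<Rightarrow> real"
  assumes "\<forall>j\<in>J. x j \<ge> 0" "finite J" "J \<noteq> {}"
  shows "(\<Prod>j\<in>J. x j) \<le> (\<Sum>j\<in>J. x j ^ card J)"
proof -
  define M where "M = Max (x ` J)"
  have "M \<in> x ` J" unfolding M_def using assms by (intro Max_in) auto
  then obtain j0 where j0: "j0 \<in> J" "x j0 = M" by auto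
  have "(\<Prod>j\<in>J. x j) \<le> (\<Prod>j\<in>J. M)"
    by (rule prod_mono) (use assms in \<open>auto simp: M_def\<close>)
  also have "\<dots> = x j0 ^ card J" using j0 by simp
  also have "\<dots> \<le> (\<Sum>j\<in>J. x j ^ card J)"
    by (rule member_le_sum) (use assms j0 in auto)
  finally show ?thesis .
qed

lemma Hsum_le_sum_rho_pow5:
  "Hsum a Y q c H \<le> (\<Sum>k=1..5. \<Sum>v\<in>Hset a Y q c H. rho (v k) ^ 5)"
proof -
  have "Hsum a Y q c H \<le> (\<Sum>v\<in>Hset a Y q c H. \<Sum>k=1..5. rho (v k) ^ 5)"
    unfolding Hsum_def
  proof (rule sum_mono)
    fix v :: "nat \<Rightarrow> int"
    have "(\<Prod>k\<in>{1..5::nat}. rho (v k)) \<le> (\<Sum>k\<in>{1..5::nat}. rho (v k) ^ card {1..5::nat})"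
      by (rule prod_le_sum_power_card) (auto intro: order_trans[OF zero_le_one rho_ge_1])
    then show "(\<Prod>k=1..5. rho (v k)) \<le> (\<Sum>k=1..5. rho (v k) ^ 5)" by simp
  qed
  then show ?thesis by (simp add: sum.swap[of _ "Hset a Y q c H"])
qed

lemma one_plus_pow_le:
  fixes x :: real
  assumes "0 \<le> x" "x \<le> 1"
  shows "(1 + x) ^ n \<le> 1 + (2 ^ n - 1) * x"
proof (induction n)
  case 0 then show ?case by simp
next
  case (Suc n)
  have "(1 + x) ^ Suc n \<le> (1 + x) * (1 + (2 ^ n - 1) * x)"
    using Suc.IH assms by (simp add: mult_left_mono)
  also have "\<dots> = 1 + 2 ^ n * x + (2 ^ n - 1) * (x * x)" by (simp add: algebra_simps)
  also have "\<dots> \<le> 1 + 2 ^ n * x + (2 ^ n - 1) * x"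
    using assms by (intro add_left_mono mult_left_mono) (auto simp: mult_left_le)
  also have "\<dots> = 1 + (2 ^ Suc n - 1) * x" by (simp add: algebra_simps)
  finally show ?case .
qed

text \<open>Fewer than y primes p > y divide n: if r of them do, then y^r \<le> |n| < X \<le> e^y \<le> y^y.\<close>

lemma prod_large_prime_factors_le_exp_1:
  fixes n :: int and X y :: real
  assumes n: "n \<noteq> 0" "real_of_int \<bar>n\<bar> < X" and y: "ln X \<le> y" "exp 1 \<le> y"
  shows "(\<Prod>p | p \<in> prime_factors (nat \<bar>n\<bar>) \<and> y < real p. 1 + 1 / real p) \<le> exp 1"
proof -
  let ?Q = "{p \<in> prime_factors (nat \<bar>n\<bar>). y < real p}"
  have fQ: "finite ?Q" by simp
  have ypos: "y > 0" using y(2) exp_gt_zero[of 1] by linarith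
  have lny: "ln y \<ge> 1" using y(2) ypos by (metis ln_exp ln_le_cancel_iff exp_gt_zero)
  have Xpos: "X > 0" using n(2) abs_ge_zero[of n] by linarith
  have cardQ: "real (card ?Q) \<le> y"
  proof -
    have "\<Prod>?Q dvd nat \<bar>n\<bar>"
      by (rule prod_primes_dvd_nat[OF fQ]) auto
    then have "\<Prod>?Q \<le> nat \<bar>n\<bar>" using n(1) by (intro dvd_imp_le) auto
    then have "real (\<Prod>?Q) < X" using n(2) by linarith
    moreover have "y ^ card ?Q \<le> real (\<Prod>?Q)"
    proof -
      have "(\<Prod>p\<in>?Q. y) \<le> (\<Prod>p\<in>?Q. real p)"
        using ypos by (intro prod_mono) (auto simp: less_imp_le)
      then show ?thesis by simp
    qed
    ultimately have "ln (y ^ card ?Q) < ln X" using ypos Xpos by (subst ln_less_cancel_iff) auto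
    then have "real (card ?Q) * ln y < y" using ypos y(1) by (simp add: ln_realpow)
    moreover have "real (card ?Q) \<le> real (card ?Q) * ln y" using lny by (simp add: mult_le_cancel_left1)
    ultimately show ?thesis by simp
  qed
  have "(\<Prod>p\<in>?Q. 1 + 1 / real p) \<le> exp (\<Sum>p\<in>?Q. 1 / real p)"
    by (rule prod_le_exp_sum) simp
  also have "(\<Sum>p\<in>?Q. 1 / real p) \<le> (\<Sum>p\<in>?Q. 1 / y)"
    using ypos by (intro sum_mono) (simp add: frac_le)
  also have "\<dots> = real (card ?Q) / y" by simp
  also have "\<dots> \<le> 1" using cardQ ypos by simp
  finally show ?thesis by simp
qed

lemma rho_pow5_le:
  fixes n :: int and X :: real and N :: nat
  assumes n: "n \<noteq> 0" "real_of_int \<bar>n\<bar> < X" and X: "ln X \<le> 2^N" "exp 1 \<le> ln X"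
  shows "rho n ^ 5 \<le> exp 5 * (\<Prod>p\<in>{p. prime p \<and> p \<le> 2^N} \<inter> prime_factors (nat \<bar>n\<bar>). 1 + 31 / real p)"
proof -
  let ?F = "prime_factors (nat \<bar>n\<bar>)"
  let ?P = "{p::nat. prime p \<and> p \<le> 2^N}"
  have "rho n = (\<Prod>p\<in>?F \<inter> ?P. 1 + 1 / real p) * (\<Prod>p\<in>?F - ?P. 1 + 1 / real p)"
    unfolding rho_def using prod.Int_Diff[of ?F _ ?P] by simp
  moreover have "?F - ?P = {p \<in> ?F. 2^N < real p}"
    by (auto simp: not_le)
  ultimately have split: "rho n = (\<Prod>p\<in>?F \<inter> ?P. 1 + 1 / real p) *
      (\<Prod>p | p \<in> ?F \<and> 2^N < real p. 1 + 1 / real p)" by simp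
  have small: "(\<Prod>p\<in>?F \<inter> ?P. 1 + 1 / real p) ^ 5 \<le> (\<Prod>p\<in>?P \<inter> ?F. 1 + 31 / real p)"
  proof -
    have "(\<Prod>p\<in>?F \<inter> ?P. 1 + 1 / real p) ^ 5 = (\<Prod>p\<in>?F \<inter> ?P. (1 + 1 / real p) ^ 5)"
      by (rule prod_power_distrib)
    also have "\<dots> \<le> (\<Prod>p\<in>?F \<inter> ?P. 1 + 31 / real p)"
    proof (rule prod_mono, safe)
      fix p assume "p \<in> ?F"
      then have "p \<ge> 1" using in_prime_factors_imp_prime prime_ge_1_nat by blast
      then show "(1 + 1 / real p) ^ 5 \<le> 1 + 31 / real p"
        using one_plus_pow_le[of "1 / real p" 5] by simp
    qed simp
    finally show ?thesis by (simp add: Int_commute)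
  qed
  have "exp 1 \<le> (2::real)^N" using X by linarith
  then have "(\<Prod>p | p \<in> ?F \<and> 2^N < real p. 1 + 1 / real p) ^ 5 \<le> exp 1 ^ 5"
    using prod_large_prime_factors_le_exp_1[OF n X(1)]
    by (intro power_mono) (auto intro: prod_nonneg)
  then have large: "(\<Prod>p | p \<in> ?F \<and> 2^N < real p. 1 + 1 / real p) ^ 5 \<le> exp 5"
    by (simp add: exp_of_nat_mult[symmetric])
  show ?thesis
    unfolding split power_mult_distrib using small large
    by (subst mult.commute, intro mult_mono) (auto intro: prod_nonneg)
qed

section \<open>Counting the vectors v\<close>

lemma card_pairwise_congruent_le:
  fixes T :: "int set" and s :: int and R :: real
  assumes s: "s > 0" and R: "R \<ge> 0" and bd: "\<forall>x\<in>T. real_of_int \<bar>x\<bar> \<le> R"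
    and dv: "\<forall>x\<in>T. \<forall>y\<in>T. s dvd x - y"
  shows "real (card T) \<le> 2*R/s + 3"
proof -
  define K where "K = \<lfloor>R / s\<rfloor>"
  have inj: "inj_on (\<lambda>x. x div s) T"
  proof (rule inj_onI)
    fix x y assume x: "x \<in> T" and y: "y \<in> T" and e: "x div s = y div s"
    have "x mod s = y mod s" using dv x y by (simp add: mod_eq_dvd_iff)
    then show "x = y" using e by (metis div_mult_mod_eq)
  qed
  have sub: "(\<lambda>x. x div s) ` T \<subseteq> {-K-1..K}"
  proof
    fix z assume "z \<in> (\<lambda>x. x div s) ` T"
    then obtain x where x: "x \<in> T" "z = x div s" by auto
    have m0: "0 \<le> x mod s" "x mod s < s" using s by simp_all
    have xr: "real_of_int x = real_of_int s * real_of_int z + real_of_int (x mod s)"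
      using x(2) by (metis div_mult_mod_eq mult.commute of_int_add of_int_mult)
    have xb: "- R \<le> real_of_int x" "real_of_int x \<le> R" using bd x(1) by auto
    have sr: "real_of_int s > 0" using s by simp
    have "real_of_int s * real_of_int z \<le> R" using xr xb m0 by (smt (verit) of_int_nonneg)
    then have "real_of_int z \<le> R / s" using sr by (simp add: field_simps)
    then have u: "z \<le> K" unfolding K_def by (simp add: le_floor_iff)
    have "real_of_int s * real_of_int z > - R - real_of_int s" using xr xb m0
      by (smt (verit) of_int_less_iff)
    then have "real_of_int z > - R / s - 1" using sr by (simp add: field_simps)
    moreover have "R / s < real_of_int K + 1" unfolding K_def by linarith
    ultimately have "z \<ge> -K - 1" by linarith
    with u show "z \<in> {-K-1..K}" by simp
  qed
  have "card T = card ((\<lambda>x. x div s) ` T)" using inj by (simp add: card_image)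
  also have "\<dots> \<le> card {-K-1..K}" using sub by (intro card_mono) auto
  also have "\<dots> = nat (2*K + 2)" by simp
  finally have c: "card T \<le> nat (2*K+2)" .
  have K0: "K \<ge> 0" unfolding K_def using R s by simp
  have "real_of_int K \<le> R / s" unfolding K_def by simp
  then have "real (nat (2*K+2)) \<le> 2*R/s + 2" using K0 by simp
  then show ?thesis using c by (smt (verit) of_nat_le_iff)
qed

lemma card_image_restrict_le:
  assumes "finite J" "\<And>j. j \<in> J \<Longrightarrow> finite (T j)" "\<And>x j. x \<in> S \<Longrightarrow> j \<in> J \<Longrightarrow> f j x \<in> T j"
  shows "card ((\<lambda>x. restrict (\<lambda>j. f j x) J) ` S) \<le> (\<Prod>j\<in>J. card (T j))"
proof -
  have "(\<lambda>x. restrict (\<lambda>j. f j x) J) ` S \<subseteq> PiE J T" using assms(3) by (auto simp: restrict_PiE_iff)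
  then have "card ((\<lambda>x. restrict (\<lambda>j. f j x) J) ` S) \<le> card (PiE J T)"
    using assms(1,2) by (intro card_mono finite_PiE) auto
  also have "\<dots> = (\<Prod>j\<in>J. card (T j))" using assms(1) by (rule card_PiE)
  finally show ?thesis .
qed

lemma card_le_card_image_mult:
  assumes "finite S" and "\<And>y. y \<in> f ` S \<Longrightarrow> real (card {x\<in>S. f x = y}) \<le> B"
  shows "real (card S) \<le> real (card (f ` S)) * B"
proof -
  have "card S = (\<Sum>y\<in>f ` S. card {x\<in>S. f x = y})"
    unfolding card_eq_sum by (rule sum.image_gen[OF assms(1)])
  then have "real (card S) = (\<Sum>y\<in>f ` S. real (card {x\<in>S. f x = y}))" by simp
  also have "\<dots> \<le> (\<Sum>y\<in>f ` S. B)" using assms(2) by (intro sum_mono) auto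
  also have "\<dots> = real (card (f ` S)) * B" by simp
  finally show ?thesis .
qed

lemma finite_Hset: "finite (Hset a Y q c H)"
proof -
  define M where "M = \<lceil>Y\<rceil>"
  have "Hset a Y q c H \<subseteq> {f. \<forall>x. (x \<in> {1..5} \<longrightarrow> f x \<in> {-M..M}) \<and> (x \<notin> {1..5} \<longrightarrow> f x = 0)}"
  proof safe
    fix v and x :: nat assume "v \<in> Hset a Y q c H" "x \<in> {1..5}"
    then have "real_of_int \<bar>v x\<bar> < Y" unfolding Hset_def by auto
    then show "v x \<in> {-M..M}" unfolding M_def by auto linarith+
  next
    fix v and x :: nat assume "v \<in> Hset a Y q c H" "x \<notin> {1..5}"
    then show "v x = 0" unfolding Hset_def by auto
  qed
  then show ?thesis by (rule finite_subset) (rule finite_set_of_finite_funs; simp)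
qed

lemma dvd_hfun_diff:
  fixes A :: "nat set" and \<Delta> \<beta> :: int
  assumes lin: "\<forall>v v'. (\<forall>j\<in>{1..5}-{m}. hfun a j v = hfun a j v') \<longrightarrow>
        2*\<Delta>*(v k - v' k) = \<beta>*(hfun a m v - hfun a m v')"
    and m: "m \<in> {1..5}" and A: "finite A" "\<forall>p\<in>A. prime p"
    and v: "v \<in> Hset a Y q c H" "\<forall>p\<in>A. int p dvd v k"
    and v': "v' \<in> Hset a Y q c H" "\<forall>p\<in>A. int p dvd v' k"
    and agree: "\<forall>j\<in>{1..5}-{m}. hfun a j v = hfun a j v'"
  shows "int q * int (\<Prod>{p\<in>A. \<not> int p dvd int q * \<beta>}) dvd hfun a m v - hfun a m v'"
proof -
  let ?A' = "{p\<in>A. \<not> int p dvd int q * \<beta>}"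
  have "hfun a m v mod int q = c m mod int q" "hfun a m v' mod int q = c m mod int q"
    using v(1) v'(1) m unfolding Hset_def by auto
  then have q_dvd: "int q dvd hfun a m v - hfun a m v'" by (simp add: mod_eq_dvd_iff[symmetric])
  have relation: "2*\<Delta>*(v k - v' k) = \<beta>*(hfun a m v - hfun a m v')" using lin agree by blast
  have "\<forall>p\<in>?A'. prime p \<and> int p dvd hfun a m v - hfun a m v'"
  proof
    fix p assume p: "p \<in> ?A'"
    have pp: "prime p" using p A by auto
    have "int p dvd v k" "int p dvd v' k" using p v(2) v'(2) by auto
    then have "int p dvd \<beta>*(hfun a m v - hfun a m v')" using relation by (metis dvd_diff dvd_mult)
    moreover have "\<not> int p dvd \<beta>" using p by (auto simp: dvd_mult)
    moreover have "prime (int p)" using pp by simp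
    ultimately show "prime p \<and> int p dvd hfun a m v - hfun a m v'"
      using pp prime_dvd_mult_iff by blast
  qed
  then have A'_dvd: "int (\<Prod>?A') dvd hfun a m v - hfun a m v'"
    using A(1) by (intro prod_primes_dvd_int) auto
  have "coprime q (\<Prod>?A')"
  proof (rule prod_coprime_right)
    fix p assume p: "p \<in> ?A'"
    then have "\<not> p dvd q" by (auto simp: dvd_mult2 simp flip: int_dvd_int_iff)
    then show "coprime q p" using prime_imp_coprime p A(2) coprime_commute by blast
  qed
  then have "coprime (int q) (int (\<Prod>?A'))" by (simp only: coprime_int_iff)
  then show ?thesis using divides_mult[OF q_dvd A'_dvd] by blast
qed

lemma card_hfun_image_le:
  assumes S: "S \<subseteq> Hset a Y q c H" and J: "J \<subseteq> {1..5}" and q: "q > 0" and H: "\<forall>i\<in>{1..5}. H i \<ge> 0"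
  shows "real (card ((\<lambda>v. restrict (\<lambda>j. hfun a j v) J) ` S)) \<le> (\<Prod>j\<in>J. 4 * H j / real q + 3)"
proof -
  define T where "T j = {w::int. real_of_int \<bar>w\<bar> \<le> 2 * H j \<and> w mod int q = c j mod int q}" for j
  have "card ((\<lambda>v. restrict (\<lambda>j. hfun a j v) J) ` S) \<le> (\<Prod>j\<in>J. card (T j))"
  proof (rule card_image_restrict_le)
    show "finite J" using J finite_subset by blast
    show "finite (T j)" for j
      by (rule finite_subset[of _ "{-\<lceil>2 * H j\<rceil>..\<lceil>2 * H j\<rceil>}"]) (auto simp: T_def, linarith+)
    show "hfun a j v \<in> T j" if "v \<in> S" "j \<in> J" for v j
      using that S J unfolding Hset_def T_def by auto
  qed
  then have "real (card ((\<lambda>v. restrict (\<lambda>j. hfun a j v) J) ` S)) \<le> real (\<Prod>j\<in>J. card (T j))"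
    by (simp only: of_nat_le_iff)
  also have "\<dots> = (\<Prod>j\<in>J. real (card (T j)))" by (rule of_nat_prod)
  also have "\<dots> \<le> (\<Prod>j\<in>J. 4 * H j / real q + 3)"
  proof (rule prod_mono)
    fix j assume "j \<in> J"
    then have j: "j \<in> {1..5}" using J by blast
    have "real (card (T j)) \<le> 2 * (2 * H j) / real_of_int (int q) + 3"
    proof (rule card_pairwise_congruent_le)
      show "int q > 0" "2 * H j \<ge> 0" using q H j by auto
      show "\<forall>x\<in>T j. real_of_int \<bar>x\<bar> \<le> 2 * H j" unfolding T_def by auto
      show "\<forall>x\<in>T j. \<forall>y\<in>T j. int q dvd x - y" unfolding T_def
        by (metis (mono_tags, lifting) mem_Collect_eq mod_eq_dvd_iff)
    qed
    then show "0 \<le> real (card (T j)) \<and> real (card (T j)) \<le> 4 * H j / real q + 3" by simp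
  qed
  finally show ?thesis .
qed

lemma card_Hset_agreeing_le:
  fixes a :: "nat \<Rightarrow> nat \<Rightarrow> int" and \<Delta> \<beta> :: int and A :: "nat set"
  assumes rank: "rank (M0 a) = 5" and m: "m \<in> {1..5}"
    and lin: "\<forall>v v'. (\<forall>j\<in>{1..5}-{m}. hfun a j v = hfun a j v') \<longrightarrow>
        2*\<Delta>*(v k - v' k) = \<beta>*(hfun a m v - hfun a m v')"
    and q: "q > 0" and H: "\<forall>i\<in>{1..5}. H i \<ge> 0"
    and A: "finite A" "\<forall>p\<in>A. prime p"
    and F: "F \<subseteq> {v\<in>Hset a Y q c H. \<forall>p\<in>A. int p dvd v k}"
    and agree: "\<And>v v'. v \<in> F \<Longrightarrow> v' \<in> F \<Longrightarrow> \<forall>j\<in>{1..5}-{m}. hfun a j v = hfun a j v'"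
  shows "real (card F) \<le> 4 * H m / (real q * real (\<Prod>{p\<in>A. \<not> int p dvd int q * \<beta>})) + 3"
proof -
  let ?D = "\<Prod>{p\<in>A. \<not> int p dvd int q * \<beta>}"
  have D: "?D > 0" using A prime_gt_0_nat by (auto intro: prod_pos)
  have "inj_on (hfun a m) F"
  proof (rule inj_onI)
    fix v v' assume v: "v \<in> F" and v': "v' \<in> F" and e: "hfun a m v = hfun a m v'"
    have "\<forall>j\<in>{1..5}. hfun a j v = hfun a j v'"
      using agree[OF v v'] e by (metis DiffI singletonD)
    moreover have "\<forall>j. j \<notin> {1..5} \<longrightarrow> v j = 0" "\<forall>j. j \<notin> {1..5} \<longrightarrow> v' j = 0"
      using v v' F unfolding Hset_def by auto
    ultimately show "v = v'" using hfun_inj[OF rank] by blast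
  qed
  then have "real (card F) = real (card (hfun a m ` F))" by (simp add: card_image)
  also have "\<dots> \<le> 2 * (2 * H m) / real_of_int (int q * int ?D) + 3"
  proof (rule card_pairwise_congruent_le)
    show "int q * int ?D > 0" using q D by (metis of_nat_0_less_iff mult_pos_pos)
    show "2 * H m \<ge> 0" using H m by auto
    show "\<forall>x\<in>hfun a m ` F. real_of_int \<bar>x\<bar> \<le> 2 * H m"
      using m F unfolding Hset_def by auto
    show "\<forall>x\<in>hfun a m ` F. \<forall>y\<in>hfun a m ` F. int q * int ?D dvd x - y"
    proof (intro ballI)
      fix x y assume "x \<in> hfun a m ` F" "y \<in> hfun a m ` F"
      then obtain v v' where v: "v \<in> F" and v': "v' \<in> F"
        and xy: "x = hfun a m v" "y = hfun a m v'" by auto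
      have "int q * int ?D dvd hfun a m v - hfun a m v'"
        by (rule dvd_hfun_diff[OF lin m A]) (use v v' F agree[OF v v'] in auto)
      then show "int q * int ?D dvd x - y" using xy by simp
    qed
  qed
  also have "\<dots> = 4 * H m / (real q * real ?D) + 3" by simp
  finally show ?thesis .
qed

lemma card_Hset_dvd_le:
  fixes a :: "nat \<Rightarrow> nat \<Rightarrow> int" and \<Delta> \<beta> :: int and A :: "nat set"
  assumes rank: "rank (M0 a) = 5" and m: "m \<in> {1..5}"
    and lin: "\<forall>v v'. (\<forall>j\<in>{1..5}-{m}. hfun a j v = hfun a j v') \<longrightarrow>
        2*\<Delta>*(v k - v' k) = \<beta>*(hfun a m v - hfun a m v')"
    and q: "q > 0" and H: "\<forall>i\<in>{1..5}. H i \<ge> 0"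
    and A: "finite A" "\<forall>p\<in>A. prime p"
  shows "real (card {v\<in>Hset a Y q c H. \<forall>p\<in>A. int p dvd v k}) \<le>
     (\<Prod>j\<in>{1..5}-{m}. 4 * H j / real q + 3) *
     (4 * H m / (real q * real (\<Prod>{p\<in>A. \<not> int p dvd int q * \<beta>})) + 3)"
proof -
  let ?S = "{v\<in>Hset a Y q c H. \<forall>p\<in>A. int p dvd v k}"
  let ?J = "{1..5::nat}-{m}"
  let ?B = "4 * H m / (real q * real (\<Prod>{p\<in>A. \<not> int p dvd int q * \<beta>})) + 3"
  define \<pi> where "\<pi> v = restrict (\<lambda>j. hfun a j v) ?J" for v
  have fibre: "real (card {v\<in>?S. \<pi> v = f}) \<le> ?B" for f
  proof (rule card_Hset_agreeing_le[OF rank m lin q H A])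
    show "{v\<in>?S. \<pi> v = f} \<subseteq> ?S" by blast
    show "\<forall>j\<in>?J. hfun a j v = hfun a j v'" if "v \<in> {v\<in>?S. \<pi> v = f}" "v' \<in> {v\<in>?S. \<pi> v = f}" for v v'
    proof
      fix j assume "j \<in> ?J"
      moreover have "\<pi> v j = \<pi> v' j" using that by simp
      ultimately show "hfun a j v = hfun a j v'" unfolding \<pi>_def by simp
    qed
  qed
  have "?B \<ge> 0"
    by (intro add_nonneg_nonneg divide_nonneg_nonneg mult_nonneg_nonneg)
      (use H m in \<open>auto intro: prod_nonneg\<close>)
  then have "real (card ?S) \<le> real (card (\<pi> ` ?S)) * ?B"
    using card_le_card_image_mult[OF _ fibre] finite_Hset by simp
  also have "\<dots> \<le> (\<Prod>j\<in>?J. 4 * H j / real q + 3) * ?B"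
    using card_hfun_image_le[of ?S a Y q c H ?J] q H \<open>?B \<ge> 0\<close> unfolding \<pi>_def
    by (intro mult_right_mono) auto
  finally show ?thesis .
qed

lemma prod_count_bound_le:
  fixes H :: "nat \<Rightarrow> real" and L D :: real and q :: nat
  assumes m: "m \<in> {1..5}" and L: "L \<ge> 1" and q: "q > 0" and H: "\<forall>i\<in>{1..5}. H i \<ge> real q * L"
    and D: "D > 0"
  shows "(\<Prod>j\<in>{1..5}-{m}. 4 * H j / real q + 3) * (4 * H m / (real q * D) + 3)
     \<le> 7^4 * ((\<Prod>i=1..5. H i) / real q ^ 5) * (4 / D + 3 / L)"
proof -
  have Hq: "H i / q \<ge> L" if "i \<in> {1..5}" for i
    using H that q by (simp add: field_simps)
  have "(\<Prod>j\<in>{1..5}-{m}. 4 * H j / real q + 3) \<le> (\<Prod>j\<in>{1..5}-{m}. 7 * (H j / q))"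
  proof (rule prod_mono)
    fix j assume "j \<in> {1..5::nat} - {m}"
    then have "H j / q \<ge> 1" using Hq L by force
    then show "0 \<le> 4 * H j / q + 3 \<and> 4 * H j / q + 3 \<le> 7 * (H j / q)" by simp
  qed
  also have "\<dots> = 7^4 * (\<Prod>j\<in>{1..5}-{m}. H j / q)"
  proof -
    have "card ({1..5::nat}-{m}) = 4" using m by simp
    then show ?thesis by (subst prod.distrib) simp
  qed
  finally have rest: "(\<Prod>j\<in>{1..5}-{m}. 4 * H j / real q + 3) \<le> 7^4 * (\<Prod>j\<in>{1..5}-{m}. H j / q)" .
  have Hm: "4 * H m / (real q * D) + 3 \<le> (H m / q) * (4 / D + 3 / L)"
  proof -
    have "(H m / q) / L \<ge> 1" using Hq[OF m] L by (subst le_divide_eq_1_pos) auto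
    then have "3 \<le> 3 * ((H m / q) / L)" by simp
    also have "\<dots> = (H m / q) * (3 / L)" by simp
    finally have "3 \<le> (H m / q) * (3 / L)" .
    moreover have "4 * H m / (q * D) = (H m / q) * (4 / D)" by simp
    ultimately show ?thesis by (simp add: distrib_left mult.commute)
  qed
  have Hq0: "H j / q \<ge> 0" if "j \<in> {1..5}" for j using Hq[OF that] L by simp
  have "(\<Prod>j\<in>{1..5}-{m}. 4 * H j / real q + 3) * (4 * H m / (real q * D) + 3)
      \<le> (7^4 * (\<Prod>j\<in>{1..5}-{m}. H j / q)) * ((H m / q) * (4 / D + 3 / L))"
  proof (rule mult_mono[OF rest Hm])
    have "(\<Prod>j\<in>{1..5}-{m}. H j / q) \<ge> 0" using Hq0 by (intro prod_nonneg) simp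
    then show "0 \<le> 7^4 * (\<Prod>j\<in>{1..5}-{m}. H j / q)" by simp
    have "H m / q * (4 / D) \<ge> 0" using Hq0[OF m] D by (intro mult_nonneg_nonneg) auto
    moreover have "4 * H m / (real q * D) = H m / q * (4 / D)" by simp
    ultimately show "0 \<le> 4 * H m / (real q * D) + 3" by linarith
  qed
  also have "\<dots> = 7^4 * ((\<Prod>j\<in>{1..5}-{m}. H j / q) * (H m / q)) * (4 / D + 3 / L)"
    by (simp add: mult_ac)
  also have "(\<Prod>j\<in>{1..5}-{m}. H j / q) * (H m / q) = (\<Prod>i=1..5. H i / q)"
    using prod.remove[of "{1..5::nat}" m "\<lambda>i. H i / q"] m by (simp add: mult.commute)
  also have "(\<Prod>i=1..5. H i / q) = (\<Prod>i=1..5. H i) / real q ^ 5"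
    by (simp add: prod_dividef)
  finally show ?thesis .
qed

section \<open>Sums over sets of small primes\<close>

lemma sum_Pow_prod:
  fixes f :: "'a \<Rightarrow> real"
  assumes "finite P"
  shows "(\<Sum>A\<in>Pow P. \<Prod>p\<in>A. f p) = (\<Prod>p\<in>P. 1 + f p)"
  using prod_add[OF assms, of f "\<lambda>_. 1"] by (simp add: add.commute)

lemma sum_rho_pow5_le_sum_Pow:
  assumes X: "exp 1 \<le> ln X" "ln X \<le> 2^N" and YX: "Y \<le> X" and k: "k \<in> {1..5}"
  shows "(\<Sum>v\<in>Hset a Y q c H. rho (v k) ^ 5) \<le>
    exp 5 * (\<Sum>A\<in>Pow {p. prime p \<and> p \<le> 2^N}. (\<Prod>p\<in>A. 31 / real p) *
       real (card {v\<in>Hset a Y q c H. \<forall>p\<in>A. int p dvd v k}))"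
proof -
  let ?P = "{p::nat. prime p \<and> p \<le> 2^N}"
  let ?S = "Hset a Y q c H"
  define g where "g A = (\<Prod>p\<in>A. 31 / real p)" for A :: "nat set"
  have finP: "finite ?P" by (rule finite_subset[of _ "{..2^N}"]) auto
  have g0: "g A \<ge> 0" for A unfolding g_def by (intro prod_nonneg) auto
  have finS: "finite ?S" by (rule finite_Hset)
  have each: "rho (v k) ^ 5 \<le> exp 5 * (\<Sum>A\<in>Pow ?P. if \<forall>p\<in>A. int p dvd v k then g A else 0)"
    if v: "v \<in> ?S" for v
  proof -
    let ?F = "prime_factors (nat \<bar>v k\<bar>)"
    have "0 < \<bar>v k\<bar> \<and> real_of_int \<bar>v k\<bar> < Y" using v k unfolding Hset_def by blast
    then have vk: "v k \<noteq> 0" "real_of_int \<bar>v k\<bar> < X" using YX by auto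
    have "rho (v k) ^ 5 \<le> exp 5 * (\<Prod>p\<in>?P \<inter> ?F. 1 + 31 / real p)"
      by (rule rho_pow5_le[OF vk X(2,1)])
    also have "(\<Prod>p\<in>?P \<inter> ?F. 1 + 31 / real p) = (\<Sum>A\<in>Pow (?P \<inter> ?F). g A)"
      unfolding g_def by (rule sum_Pow_prod[symmetric]) (simp add: finP)
    also have "\<dots> = (\<Sum>A\<in>Pow (?P \<inter> ?F). if \<forall>p\<in>A. int p dvd v k then g A else 0)"
    proof (rule sum.cong[OF refl])
      fix A assume "A \<in> Pow (?P \<inter> ?F)"
      then have "\<forall>p\<in>A. int p dvd v k"
        by (auto dest!: in_prime_factors_imp_dvd subsetD)
      then show "g A = (if \<forall>p\<in>A. int p dvd v k then g A else 0)" by simp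
    qed
    also have "\<dots> \<le> (\<Sum>A\<in>Pow ?P. if \<forall>p\<in>A. int p dvd v k then g A else 0)"
      by (rule sum_mono2) (auto simp: finP g0)
    finally show ?thesis by simp
  qed
  have "(\<Sum>v\<in>?S. rho (v k) ^ 5) \<le> (\<Sum>v\<in>?S. exp 5 * (\<Sum>A\<in>Pow ?P. if \<forall>p\<in>A. int p dvd v k then g A else 0))"
    by (rule sum_mono) (rule each)
  also have "\<dots> = exp 5 * (\<Sum>A\<in>Pow ?P. \<Sum>v\<in>?S. if \<forall>p\<in>A. int p dvd v k then g A else 0)"
    by (simp add: sum_distrib_left[symmetric] sum.swap[of _ ?S])
  also have "\<dots> = exp 5 * (\<Sum>A\<in>Pow ?P. g A * real (card {v\<in>?S. \<forall>p\<in>A. int p dvd v k}))"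
  proof -
    have "(\<Sum>v\<in>?S. if \<forall>p\<in>A. int p dvd v k then g A else 0) = g A * real (card {v\<in>?S. \<forall>p\<in>A. int p dvd v k})"
      for A using sum.inter_filter[OF finS, of "\<lambda>_. g A" "\<lambda>v. \<forall>p\<in>A. int p dvd v k", symmetric]
      by simp
    then show ?thesis by simp
  qed
  finally show ?thesis unfolding g_def .
qed

lemma prod_Un_le_mult:
  fixes f :: "'a \<Rightarrow> real"
  assumes "finite A" "finite B" "\<forall>x\<in>A\<union>B. 1 \<le> f x"
  shows "prod f (A \<union> B) \<le> prod f A * prod f B"
proof -
  have "prod f (A \<union> B) * prod f (A \<inter> B) = prod f A * prod f B"
    using prod.union_inter[OF assms(1,2)] by simp
  moreover have "prod f (A \<inter> B) \<ge> 1" using assms by (intro prod_ge_1) auto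
  moreover have "prod f (A \<union> B) \<ge> 0" using assms by (intro prod_nonneg) (auto intro: order_trans[OF zero_le_one])
  ultimately show ?thesis using mult_left_mono[of 1 "prod f (A \<inter> B)" "prod f (A \<union> B)"] by simp
qed

lemma prod_primes_dvd_mult_le:
  fixes P :: "nat set" and \<beta> :: int
  assumes P: "finite P" "\<forall>p\<in>P. prime p" and q: "q > 0" and \<beta>: "\<beta> \<noteq> 0"
  shows "(\<Prod>p | p \<in> P \<and> int p dvd int q * \<beta>. 1 + 31 / real p)
     \<le> 32 ^ 31 * real (tau q) * (\<Prod>p\<in>prime_factors (nat \<bar>\<beta>\<bar>). 1 + 31 / real p)"
proof -
  let ?Q = "prime_factors q" and ?B = "prime_factors (nat \<bar>\<beta>\<bar>)"
  have "(\<Prod>p | p \<in> P \<and> int p dvd int q * \<beta>. 1 + 31 / real p) \<le> (\<Prod>p\<in>?Q \<union> ?B. 1 + 31 / real p)"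
  proof (rule prod_mono2)
    show "{p \<in> P. int p dvd int q * \<beta>} \<subseteq> ?Q \<union> ?B"
    proof
      fix p assume p: "p \<in> {p \<in> P. int p dvd int q * \<beta>}"
      then have pp: "prime p" using P by auto
      then have "int p dvd int q \<or> int p dvd \<beta>" using p prime_dvd_mult_iff[of "int p"] by auto
      then show "p \<in> ?Q \<union> ?B"
      proof
        assume "int p dvd int q"
        then show ?thesis using pp q by (simp add: in_prime_factors_iff)
      next
        assume "int p dvd \<beta>"
        then have "int p dvd int (nat \<bar>\<beta>\<bar>)" by simp
        then have "p dvd nat \<bar>\<beta>\<bar>" by (simp only: int_dvd_int_iff)
        then show ?thesis using pp \<beta> by (simp add: in_prime_factors_iff)
      qed
    qed
  qed auto
  also have "\<dots> \<le> (\<Prod>p\<in>?Q. 1 + 31 / real p) * (\<Prod>p\<in>?B. 1 + 31 / real p)"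
    by (rule prod_Un_le_mult) auto
  also have "\<dots> \<le> 32 ^ 31 * real (tau q) * (\<Prod>p\<in>?B. 1 + 31 / real p)"
  proof (rule mult_right_mono)
    have "(\<Prod>p\<in>?Q. 1 + 31 / real p) \<le> 32 ^ 31 * 2 ^ card ?Q"
      using prod_prime_factors_one_plus_le[where n = q and c = 31] by simp
    also have "(2::real) ^ card ?Q \<le> real (tau q)"
      using two_pow_card_prime_factors_le_tau[OF q] by (metis of_nat_le_iff of_nat_numeral of_nat_power)
    finally show "(\<Prod>p\<in>?Q. 1 + 31 / real p) \<le> 32 ^ 31 * real (tau q)" by simp
  qed (intro prod_nonneg, auto)
  finally show ?thesis .
qed

lemma sum_Pow_div_prod_coprime_le:
  fixes P :: "nat set" and \<beta> :: int
  assumes P: "finite P" "\<forall>p\<in>P. prime p" and q: "q > 0" and \<beta>: "\<beta> \<noteq> 0"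
  shows "(\<Sum>A\<in>Pow P. (\<Prod>p\<in>A. 31 / real p) / real (\<Prod>{p\<in>A. \<not> int p dvd int q * \<beta>}))
     \<le> exp 31 * 32 ^ 31 * real (tau q) * (\<Prod>p\<in>prime_factors (nat \<bar>\<beta>\<bar>). 1 + 31 / real p)"
proof -
  define divides where "divides p \<longleftrightarrow> int p dvd int q * \<beta>" for p
  define f where "f p = 31 / real p / (if \<not> divides p then real p else 1)" for p
  have pos: "real p > 0" if "p \<in> P" for p using P(2) that prime_gt_0_nat by auto
  have "(\<Prod>p\<in>A. 31 / real p) / real (\<Prod>{p\<in>A. \<not> int p dvd int q * \<beta>}) = (\<Prod>p\<in>A. f p)"
    if "A \<in> Pow P" for A
  proof -
    have "real (\<Prod>{p\<in>A. \<not> int p dvd int q * \<beta>}) = (\<Prod>p\<in>{p\<in>A. \<not> divides p}. real p)"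
      unfolding divides_def by simp
    also have "\<dots> = (\<Prod>p\<in>A. if \<not> divides p then real p else 1)"
      using that P(1) finite_subset by (intro prod.inter_filter) auto
    finally show ?thesis unfolding f_def by (simp add: prod_dividef prod.distrib)
  qed
  then have "(\<Sum>A\<in>Pow P. (\<Prod>p\<in>A. 31 / real p) / real (\<Prod>{p\<in>A. \<not> int p dvd int q * \<beta>}))
      = (\<Sum>A\<in>Pow P. \<Prod>p\<in>A. f p)" by (rule sum.cong[OF refl])
  also have "\<dots> = (\<Prod>p\<in>P. 1 + f p)" by (rule sum_Pow_prod[OF P(1)])
  also have "\<dots> \<le> (\<Prod>p\<in>P. (1 + 31 * (1 / (real p)^2)) * (if divides p then 1 + 31 / real p else 1))"
  proof (rule prod_mono)
    fix p assume "p \<in> P"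
    then have p: "real p > 0" by (rule pos)
    show "0 \<le> 1 + f p \<and> 1 + f p \<le> (1 + 31 * (1 / (real p)^2)) * (if divides p then 1 + 31 / real p else 1)"
    proof (cases "divides p")
      case True
      have "0 \<le> 31 * (1 / (real p)^2) * (1 + 31 / real p)" using p by simp
      then show ?thesis using True p unfolding f_def by (simp add: algebra_simps)
    next
      case False
      then show ?thesis using p unfolding f_def by (simp add: power2_eq_square)
    qed
  qed
  also have "\<dots> = (\<Prod>p\<in>P. 1 + 31 * (1 / (real p)^2)) * (\<Prod>p\<in>P. if divides p then 1 + 31 / real p else 1)"
    by (rule prod.distrib)
  also have "\<dots> \<le> exp 31 * (32 ^ 31 * real (tau q) * (\<Prod>p\<in>prime_factors (nat \<bar>\<beta>\<bar>). 1 + 31 / real p))"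
  proof (rule mult_mono)
    have "(\<Prod>p\<in>P. 1 + 31 * (1 / (real p)^2)) \<le> exp (\<Sum>p\<in>P. 31 * (1 / (real p)^2))"
      by (rule prod_le_exp_sum) simp
    also have "(\<Sum>p\<in>P. 31 * (1 / (real p)^2)) = 31 * (\<Sum>p\<in>P. 1 / (real p)^2)"
      by (simp add: sum_distrib_left)
    also have "\<dots> \<le> 31" using sum_inverse_squares_primes_le_1[OF P] by simp
    finally show "(\<Prod>p\<in>P. 1 + 31 * (1 / (real p)^2)) \<le> exp 31" by simp
    have "(\<Prod>p\<in>P. if divides p then 1 + 31 / real p else 1) = (\<Prod>p | p \<in> P \<and> divides p. 1 + 31 / real p)"
      by (rule prod.inter_filter[OF P(1), symmetric])
    also have "\<dots> \<le> 32 ^ 31 * real (tau q) * (\<Prod>p\<in>prime_factors (nat \<bar>\<beta>\<bar>). 1 + 31 / real p)"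
      unfolding divides_def by (rule prod_primes_dvd_mult_le[OF P q \<beta>])
    finally show "(\<Prod>p\<in>P. if divides p then 1 + 31 / real p else 1)
      \<le> 32 ^ 31 * real (tau q) * (\<Prod>p\<in>prime_factors (nat \<bar>\<beta>\<bar>). 1 + 31 / real p)" .
  qed (auto intro: prod_nonneg)
  finally show ?thesis by (simp only: mult.assoc)
qed

lemma sum_Pow_count_weight_le:
  fixes P :: "nat set" and \<beta> :: int and L :: real
  assumes P: "finite P" "\<forall>p\<in>P. prime p" and q: "q > 0" and \<beta>: "\<beta> \<noteq> 0"
    and L: "L \<ge> 1" "(\<Prod>p\<in>P. 1 + 31 / real p) \<le> L"
  shows "(\<Sum>A\<in>Pow P. (\<Prod>p\<in>A. 31 / real p) * (4 / real (\<Prod>{p\<in>A. \<not> int p dvd int q * \<beta>}) + 3 / L))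
     \<le> (4 * exp 31 * 32 ^ 31 * (\<Prod>p\<in>prime_factors (nat \<bar>\<beta>\<bar>). 1 + 31 / real p) + 3) * real (tau q)"
proof -
  define g where "g A = (\<Prod>p\<in>A. 31 / real p)" for A :: "nat set"
  define D where "D A = real (\<Prod>{p\<in>A. \<not> int p dvd int q * \<beta>})" for A
  define K where "K = exp 31 * 32 ^ 31 * (\<Prod>p\<in>prime_factors (nat \<bar>\<beta>\<bar>). 1 + 31 / real p)"
  have "(\<Sum>A\<in>Pow P. g A * (4 / D A + 3 / L)) = 4 * (\<Sum>A\<in>Pow P. g A / D A) + 3 / L * (\<Sum>A\<in>Pow P. g A)"
    by (simp add: sum_distrib_left sum_divide_distrib sum.distrib algebra_simps)
  also have "\<dots> \<le> 4 * (K * real (tau q)) + 3"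
  proof -
    have "(\<Sum>A\<in>Pow P. g A / D A) \<le> K * real (tau q)"
      unfolding g_def D_def K_def using sum_Pow_div_prod_coprime_le[OF P q \<beta>] by (simp add: mult_ac)
    moreover have "(\<Sum>A\<in>Pow P. g A) \<le> L" unfolding g_def using sum_Pow_prod[OF P(1)] L(2) by simp
    then have "3 / L * (\<Sum>A\<in>Pow P. g A) \<le> 3" using L(1) by (simp add: field_simps)
    ultimately show ?thesis by simp
  qed
  also have "\<dots> \<le> (4 * K + 3) * real (tau q)"
  proof -
    have "tau q \<ge> 1"
      using two_pow_card_prime_factors_le_tau[OF q] by (metis le_trans one_le_numeral one_le_power)
    then show ?thesis by (simp add: algebra_simps)
  qed
  finally show ?thesis by (simp add: g_def D_def K_def mult.assoc)
qed

text \<open>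
  The cutoff 2^N for prime factors: primes above it change \<rho>(n)^5, for |n| < X, by a bounded
  factor only, while the product of 1 + 31/p over the primes below it is at most log X.
\<close>

definition log_cutoff :: "real \<Rightarrow> nat \<Rightarrow> bool" where
  "log_cutoff X N \<longleftrightarrow> exp 1 \<le> ln X \<and> ln X \<le> 2 ^ N \<and>
     (\<Prod>p | prime p \<and> p \<le> 2 ^ N. 1 + 31 / real p) \<le> ln X"

lemma eventually_log_cutoff: "eventually (\<lambda>X. \<exists>N. log_cutoff X N) at_top"
proof -
  have "eventually (\<lambda>X::real. exp 1 \<le> ln X) at_top" by real_asymp
  moreover have "eventually (\<lambda>X::real. exp (155/2) * (log 2 (ln X) + 1) ^ 62 \<le> ln X) at_top"
    by real_asymp
  ultimately show ?thesis
  proof eventually_elim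
    case (elim X)
    define N where "N = nat \<lceil>log 2 (ln X)\<rceil>"
    have L2: "ln X \<ge> 2" using elim(1) exp_ge_add_one_self[of 1] by linarith
    then have lg1: "log 2 (ln X) \<ge> 1" by simp
    have Nge: "real N \<ge> log 2 (ln X)" unfolding N_def by linarith
    have Nle: "real N \<le> log 2 (ln X) + 1" unfolding N_def using lg1 by linarith
    have N1: "N \<ge> 1" using Nge lg1 by linarith
    have "ln X = 2 powr (log 2 (ln X))" using L2 by simp
    also have "\<dots> \<le> 2 powr (real N)" using Nge by (intro powr_mono) auto
    also have "\<dots> = 2 ^ N" by (simp add: powr_realpow)
    finally have "ln X \<le> 2 ^ N" .
    have "(\<Prod>p | prime p \<and> p \<le> 2^N. 1 + 31 / real p) \<le> exp (155/2) * real N ^ 62"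
      using prod_primes_le_pow2_le[OF N1, where c = 31] by simp
    also have "\<dots> \<le> exp (155/2) * (log 2 (ln X) + 1) ^ 62"
      using Nle by (intro mult_left_mono power_mono) auto
    also have "\<dots> \<le> ln X" by (rule elim(2))
    finally show "\<exists>N. log_cutoff X N"
      unfolding log_cutoff_def using elim(1) \<open>ln X \<le> 2 ^ N\<close> by blast
  qed
qed

lemma sum_rho_pow5_Hset_le:
  assumes rank: "rank (M0 a) = 5"
  shows "\<forall>k\<in>{1..5}. \<exists>C. \<forall>X Y q c H N. log_cutoff X N \<longrightarrow> Y \<le> X \<longrightarrow> q > 0 \<longrightarrow>
     (\<forall>i\<in>{1..5}. real q * ln X \<le> H i) \<longrightarrow>
     (\<Sum>v\<in>Hset a Y q c H. rho (v k) ^ 5) \<le> C * (\<Prod>i=1..5. H i) / real q ^ 5 * real (tau q)"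
proof (intro ballI, goal_cases)
  case (1 k)
  then have k: "k \<in> {1..5}" .
  obtain m \<Delta> \<beta> where m: "m \<in> {1..5}" and \<beta>: "\<beta> \<noteq> (0::int)"
    and lin: "\<forall>v v'. (\<forall>j\<in>{1..5}-{m}. hfun a j v = hfun a j v') \<longrightarrow>
        2*\<Delta>*(v k - v' k) = \<beta>*(hfun a m v - hfun a m v')"
    using hfun_cramer_relation[OF rank k] by blast
  define K where "K = 4 * exp 31 * 32 ^ 31 * (\<Prod>p\<in>prime_factors (nat \<bar>\<beta>\<bar>). 1 + 31 / real p) + 3"
  show ?case
  proof (rule exI[of _ "exp 5 * 7^4 * K"], intro allI impI)
    fix X Y :: real and q :: nat and c :: "nat \<Rightarrow> int" and H :: "nat \<Rightarrow> real" and N :: nat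
    assume cut: "log_cutoff X N" and YX: "Y \<le> X" and q: "q > 0"
      and H: "\<forall>i\<in>{1..5}. real q * ln X \<le> H i"
    let ?P = "{p::nat. prime p \<and> p \<le> 2^N}"
    let ?S = "Hset a Y q c H"
    define L where "L = ln X"
    define g where "g A = (\<Prod>p\<in>A. 31 / real p)" for A :: "nat set"
    define D where "D A = \<Prod>{p\<in>A. \<not> int p dvd int q * \<beta>}" for A :: "nat set"
    define Hq where "Hq = (\<Prod>i=1..5. H i) / real q ^ 5"
    have X: "exp 1 \<le> ln X" "ln X \<le> 2^N" and PL: "(\<Prod>p\<in>?P. 1 + 31 / real p) \<le> L"
      using cut unfolding log_cutoff_def L_def by auto
    have L1: "L \<ge> 1" using X(1) exp_ge_add_one_self[of 1] unfolding L_def by linarith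
    have HL: "\<forall>i\<in>{1..5}. real q * L \<le> H i" using H unfolding L_def .
    have H0: "\<forall>i\<in>{1..5}. H i \<ge> 0" using HL L1 by (meson mult_nonneg_nonneg of_nat_0_le_iff order_trans zero_le_one)
    have finP: "finite ?P" by (rule finite_subset[of _ "{..2^N}"]) auto
    have g0: "g A \<ge> 0" for A unfolding g_def by (intro prod_nonneg) auto
    have Hq0: "Hq \<ge> 0" unfolding Hq_def using H0 by (intro divide_nonneg_nonneg prod_nonneg) auto
    have count: "real (card {v\<in>?S. \<forall>p\<in>A. int p dvd v k}) \<le> 7^4 * Hq * (4 / real (D A) + 3 / L)"
      if "A \<in> Pow ?P" for A
    proof -
      have A: "finite A" "\<forall>p\<in>A. prime p" using that finP by (auto intro: finite_subset)
      have "D A > 0" unfolding D_def using A(2) prime_gt_0_nat by (auto intro: prod_pos)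
      then have D: "real (D A) > 0" by simp
      have "real (card {v\<in>?S. \<forall>p\<in>A. int p dvd v k}) \<le>
         (\<Prod>j\<in>{1..5}-{m}. 4 * H j / real q + 3) * (4 * H m / (real q * real (D A)) + 3)"
        unfolding D_def by (rule card_Hset_dvd_le[OF rank m lin q H0 A])
      also have "\<dots> \<le> 7^4 * Hq * (4 / real (D A) + 3 / L)"
        unfolding Hq_def using prod_count_bound_le[OF m L1 q HL D] by simp
      finally show ?thesis .
    qed
    have "(\<Sum>v\<in>?S. rho (v k) ^ 5) \<le> exp 5 * (\<Sum>A\<in>Pow ?P. g A * real (card {v\<in>?S. \<forall>p\<in>A. int p dvd v k}))"
      unfolding g_def by (rule sum_rho_pow5_le_sum_Pow[OF X YX k])
    also have "\<dots> \<le> exp 5 * (\<Sum>A\<in>Pow ?P. g A * (7^4 * Hq * (4 / real (D A) + 3 / L)))"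
      using count g0 by (intro mult_left_mono sum_mono) auto
    also have "\<dots> = exp 5 * 7^4 * Hq * (\<Sum>A\<in>Pow ?P. g A * (4 / real (D A) + 3 / L))"
      by (simp add: sum_distrib_left mult_ac)
    also have "\<dots> \<le> exp 5 * 7^4 * Hq * (K * real (tau q))"
      unfolding g_def D_def K_def using sum_Pow_count_weight_le[OF finP _ q \<beta> L1 PL] Hq0
      by (intro mult_left_mono) auto
    finally show "(\<Sum>v\<in>?S. rho (v k) ^ 5) \<le> exp 5 * 7^4 * K * (\<Prod>i=1..5. H i) / real q ^ 5 * real (tau q)"
      by (simp add: Hq_def mult_ac)
  qed
qed

theorem lemma5p2:
  fixes s :: nat and a :: "nat \<Rightarrow> nat \<Rightarrow> int"
  assumes "s \<ge> 10"
    and "\<forall>i\<in>{1..s}. \<forall>j\<in>{1..s}. a i j = a j i"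
    and "rank (M0 a) = 5"
  shows "\<exists>C X0. \<forall>X Y (q::nat) (c::nat \<Rightarrow> int) (H::nat \<Rightarrow> real).
           X \<ge> X0 \<longrightarrow> 1 \<le> Y \<longrightarrow> Y \<le> X \<longrightarrow> q > 0 \<longrightarrow>
           (\<forall>i\<in>{1..5}. H i > 0 \<and> H i \<ge> real q * ln X) \<longrightarrow>
           Hsum a Y q c H \<le> C * (\<Prod>i=1..5. H i) / real q ^ 5 * real (tau q)"
proof -
  obtain X0 where X0: "\<And>X. X \<ge> X0 \<Longrightarrow> \<exists>N. log_cutoff X N"
    using eventually_log_cutoff by (auto simp: eventually_at_top_linorder)
  \<comment> \<open>Only the invertibility of M0 enters.\<close>
  from bchoice[OF sum_rho_pow5_Hset_le[OF assms(3)]]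
  obtain C where C: "\<forall>k\<in>{1..5}. \<forall>X Y q c H N. log_cutoff X N \<longrightarrow> Y \<le> X \<longrightarrow> q > 0 \<longrightarrow>
     (\<forall>i\<in>{1..5}. real q * ln X \<le> H i) \<longrightarrow>
     (\<Sum>v\<in>Hset a Y q c H. rho (v k) ^ 5) \<le> C k * (\<Prod>i=1..5. H i) / real q ^ 5 * real (tau q)"
    by (rule exE) (rule that)
  show ?thesis
  proof (rule exI[of _ "\<Sum>k=1..5. C k"], rule exI[of _ X0], intro allI impI)
    fix X Y :: real and q :: nat and c :: "nat \<Rightarrow> int" and H :: "nat \<Rightarrow> real"
    assume "X \<ge> X0" "1 \<le> Y" "Y \<le> X" "q > 0" "\<forall>i\<in>{1..5}. H i > 0 \<and> H i \<ge> real q * ln X"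
    moreover obtain N where "log_cutoff X N" using X0 \<open>X \<ge> X0\<close> by blast
    ultimately have bound: "(\<Sum>v\<in>Hset a Y q c H. rho (v k) ^ 5)
        \<le> C k * (\<Prod>i=1..5. H i) / real q ^ 5 * real (tau q)" if "k \<in> {1..5}" for k
      using C that by blast
    have "Hsum a Y q c H \<le> (\<Sum>k=1..5. \<Sum>v\<in>Hset a Y q c H. rho (v k) ^ 5)"
      by (rule Hsum_le_sum_rho_pow5)
    also have "\<dots> \<le> (\<Sum>k=1..5. C k * (\<Prod>i=1..5. H i) / real q ^ 5 * real (tau q))"
      using bound by (rule sum_mono)
    also have "\<dots> = (\<Sum>k=1..5. C k) * (\<Prod>i=1..5. H i) / real q ^ 5 * real (tau q)"
      by (simp add: sum_distrib_right sum_divide_distrib)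
    finally show "Hsum a Y q c H \<le> (\<Sum>k=1..5. C k) * (\<Prod>i=1..5. H i) / real q ^ 5 * real (tau q)" .
  qed
qed

end
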